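(* Let $M\in\mathbb{N}$, $r\in\{1,\dots,M\}$, let $C\in\mathbb{R}^{M\times M}$ have singular values $\lambda_1\ge\dots\ge\lambda_M$, and let $\pi_r\in\mathcal{S}_{M,r}$ maximize $\|\tilde\pi_r C\|_{S_2}$ over $\tilde\pi_r\in\mathcal{S}_{M,r}$. Put $\Delta_r:=\sum_{i=r+1}^{2r}\lambda_i^2$. (i) For every $\tilde\pi_r\in\mathcal{S}_{M,r}$, $$\|\tilde\pi_r C\|_{S_2}^2-\|\pi_r C\|_{S_2}^2\le-\tfrac12(\lambda_r^2-\lambda_{r+1}^2)\|\tilde\pi_r-\pi_r\|_{S_2}^2.$$ (ii) Assume $\lambda_r>0$. For every $\tilde\pi_r\in\mathcal{S}_{M,r}$ with $\|\tilde\pi_r-\pi_r\|_{S_2}\ge\lambda_r^{-1}\sqrt{2\Delta_r}$, $$\|\tilde\pi_r C\|_{S_2}^2-\|\pi_r C\|_{S_2}^2\le-\tfrac12\lambda_r^2\|\tilde\pi_r-\pi_r\|_{S_2}^2+\Delta_r.$$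
   Context: $\mathcal{S}_{M,r}$ denotes the set of all orthogonal projections of rank $r$ onto subspaces of $\mathbb{R}^M$. $\|\cdot\|_{S_2}$ is the Hilbert–Schmidt norm. Convention: $\lambda_i:=0$ for $i>M$. *)

theory Defs
  imports "HOL-Analysis.Analysis"
begin

definition hs_norm :: "real^'n^'n \<Rightarrow> real" where
  "hs_norm A = sqrt (\<Sum>i\<in>UNIV. \<Sum>j\<in>UNIV. (A $ i $ j)^2)"

definition orth_proj_rank :: "nat \<Rightarrow> (real^'n^'n) set" where
  "orth_proj_rank r = {P. transpose P = P \<and> P ** P = P \<and> rank P = r}"

text \<open>lam 1 \<ge> ... \<ge> lam M are the singular values of C (indexed from 1), with the
  convention lam i = 0 for i > M (and for i = 0): there is a singular value
  decomposition C = U diag(lam) V^T with U, V orthogonal.\<close>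
definition singular_values :: "real^'n^'n \<Rightarrow> (nat \<Rightarrow> real) \<Rightarrow> bool" where
  "singular_values C lam \<longleftrightarrow>
     (\<forall>i j. 1 \<le> i \<longrightarrow> i \<le> j \<longrightarrow> j \<le> CARD('n) \<longrightarrow> lam j \<le> lam i) \<and>
     (\<forall>i. 1 \<le> i \<longrightarrow> i \<le> CARD('n) \<longrightarrow> 0 \<le> lam i) \<and>
     (\<forall>i. i = 0 \<or> CARD('n) < i \<longrightarrow> lam i = 0) \<and>
     (\<exists>U V (\<sigma>::'n \<Rightarrow> nat). orthogonal_matrix U \<and> orthogonal_matrix V \<and>
        bij_betw \<sigma> UNIV {1..CARD('n)} \<and>
        C = U ** (\<chi> i j. if i = j then lam (\<sigma> i) else 0) ** transpose V)"

end

theory Submission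
  imports Defs
begin

(* Write C = U diag(lambda o sigma) V^T. For a projection X put P_X = U^T X U; then
   ||X C||^2 = tr(W P_X) with W = diag(lambda_sigma(j)^2), and ||X - pi||^2 = 2 (r - tr(P_X P_pi)).
   The diagonal of a rank-r projection lies in [0,1] and sums to r. Comparing pi with the
   coordinate projection onto the r largest weights therefore forces the weight to be at least
   lambda_r^2 wherever the diagonal of P = P_pi is nonzero and at most lambda_(r+1)^2 wherever it
   is not 1; in particular W commutes with P. Compressing P' = P_pi' to the range of P and to its
   complement, the first part loses at least lambda_r^2 (r - tr(P'P)) against P, while the second
   gains at most lambda_(r+1)^2 (r - tr(P'P)), which gives (i), or at most
   lambda_(r+1)^2 + ... + lambda_(2r)^2 by a fractional knapsack bound, which gives (ii). *)

definition orth_proj :: "real^'n^'n \<Rightarrow> bool" where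
  "orth_proj P \<longleftrightarrow> transpose P = P \<and> P ** P = P"

definition diag_mat :: "('n \<Rightarrow> real) \<Rightarrow> real^'n^'n" where
  "diag_mat d = (\<chi> i j. if i = j then d i else 0)"

lemma matrix_diff_ldistrib: "(A::'a::ring_1^'n^'m) ** (B - C) = A ** B - A ** C"
  by (simp add: matrix_matrix_mult_def vec_eq_iff sum_subtractf right_diff_distrib)

lemma matrix_diff_rdistrib: "((A::'a::ring_1^'n^'m) - B) ** C = A ** C - B ** C"
  by (simp add: matrix_matrix_mult_def vec_eq_iff sum_subtractf left_diff_distrib)

lemma transpose_diff: "transpose ((A::'a::ab_group_add^'n^'m) - B) = transpose A - transpose B"
  by (simp add: transpose_def vec_eq_iff)

lemma gram_diag: "(transpose X ** X) $ j $ j = (\<Sum>k\<in>UNIV. ((X::real^'n^'m) $ k $ j)^2)"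
  by (simp add: matrix_matrix_mult_def transpose_def power2_eq_square)

lemma gram_diag_nonneg: "0 \<le> (transpose X ** (X::real^'n^'m)) $ j $ j"
  unfolding gram_diag by (simp add: sum_nonneg)

lemma trace_gram_nonneg: "0 \<le> trace (transpose X ** (X::real^'n^'m))"
  unfolding trace_def by (simp add: gram_diag_nonneg sum_nonneg)

subsection \<open>The Hilbert--Schmidt norm\<close>

lemma hs_norm_nonneg: "0 \<le> hs_norm X"
  by (simp add: hs_norm_def sum_nonneg)

lemma hs_norm_sq_eq_trace: "(hs_norm X)^2 = trace (transpose X ** X)"
proof -
  have "trace (transpose X ** X) = (\<Sum>j\<in>UNIV. \<Sum>k\<in>UNIV. (X $ k $ j)^2)"
    unfolding trace_def gram_diag ..
  also have "\<dots> = (\<Sum>k\<in>UNIV. \<Sum>j\<in>UNIV. (X $ k $ j)^2)"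
    by (rule sum.swap)
  finally show ?thesis
    using trace_gram_nonneg[of X] by (simp add: hs_norm_def)
qed

lemma hs_norm_eq_sqrt_trace: "hs_norm X = sqrt (trace (transpose X ** X))"
  by (metis hs_norm_nonneg hs_norm_sq_eq_trace real_sqrt_unique)

lemma hs_norm_orthogonal_mult:
  fixes U X :: "real^'n^'n"
  assumes "orthogonal_matrix U"
  shows "hs_norm (U ** X) = hs_norm X"
proof -
  have "transpose (U ** X) ** (U ** X) = transpose X ** (transpose U ** U) ** X"
    by (simp add: matrix_transpose_mul matrix_mul_assoc)
  with assms show ?thesis
    by (simp add: hs_norm_eq_sqrt_trace orthogonal_matrix_def)
qed

lemma hs_norm_mult_orthogonal:
  fixes U X :: "real^'n^'n"
  assumes "orthogonal_matrix U"
  shows "hs_norm (X ** U) = hs_norm X"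
proof -
  have "trace (transpose (X ** U) ** (X ** U)) = trace (transpose U ** ((transpose X ** X) ** U))"
    by (simp add: matrix_transpose_mul matrix_mul_assoc)
  also have "\<dots> = trace (((transpose X ** X) ** U) ** transpose U)"
    by (rule trace_mul_sym)
  also have "\<dots> = trace (transpose X ** X)"
    using assms by (simp add: orthogonal_matrix_def matrix_mul_assoc[symmetric])
  finally show ?thesis
    by (simp add: hs_norm_eq_sqrt_trace)
qed

lemma hs_norm_orthogonal_conj:
  fixes U X :: "real^'n^'n"
  assumes "orthogonal_matrix U"
  shows "hs_norm (transpose U ** X ** U) = hs_norm X"
  using assms by (simp add: hs_norm_orthogonal_mult hs_norm_mult_orthogonal)

lemma hs_norm_mult_svd:
  fixes U V X D :: "real^'n^'n"
  assumes U: "orthogonal_matrix U" and V: "orthogonal_matrix V"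
  shows "hs_norm (X ** (U ** D ** transpose V)) = hs_norm ((transpose U ** X ** U) ** D)"
proof -
  have "X ** (U ** D ** transpose V) = U ** ((transpose U ** X ** U) ** D) ** transpose V"
    using U by (simp add: matrix_mul_assoc orthogonal_matrix_def)
  then show ?thesis
    using U V by (simp add: hs_norm_orthogonal_mult hs_norm_mult_orthogonal)
qed

subsection \<open>Orthogonal projections\<close>

lemma orth_proj_compl: "orth_proj P \<Longrightarrow> orth_proj (mat 1 - P)"
  unfolding orth_proj_def by (simp add: transpose_diff matrix_diff_ldistrib matrix_diff_rdistrib)

lemma orth_proj_orthogonal_conj:
  fixes U P :: "real^'n^'n"
  assumes U: "orthogonal_matrix U" and P: "orth_proj P"
  shows "orth_proj (transpose U ** P ** U)"
proof -
  have "(transpose U ** P ** U) ** (transpose U ** P ** U)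
      = transpose U ** (P ** (U ** transpose U) ** P) ** U"
    by (simp add: matrix_mul_assoc)
  also have "\<dots> = transpose U ** P ** U"
    using U P by (simp add: orthogonal_matrix_def orth_proj_def)
  finally show ?thesis
    using P by (simp add: orth_proj_def matrix_transpose_mul matrix_mul_assoc)
qed

lemma trace_orthogonal_conj:
  fixes U X :: "real^'n^'n"
  assumes "orthogonal_matrix U"
  shows "trace (transpose U ** X ** U) = trace X"
proof -
  have "trace ((transpose U ** X) ** U) = trace (U ** (transpose U ** X))"
    by (rule trace_mul_sym)
  with assms show ?thesis
    by (simp add: orthogonal_matrix_def matrix_mul_assoc)
qed

lemma orth_proj_compress_eq_gram:
  assumes "orth_proj (P::real^'n^'n)" "orth_proj S"
  shows "P ** S ** P = transpose (S ** P) ** (S ** P)"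
proof -
  have "transpose (S ** P) ** (S ** P) = transpose P ** (transpose S ** S) ** P"
    by (simp add: matrix_transpose_mul matrix_mul_assoc)
  with assms show ?thesis
    by (simp add: orth_proj_def)
qed

lemma trace_orth_proj_compress:
  assumes "orth_proj (P::real^'n^'n)"
  shows "trace (P ** S ** P) = trace (S ** P)"
proof -
  have "trace ((P ** S) ** P) = trace (P ** (P ** S))"
    by (rule trace_mul_sym)
  also have "\<dots> = trace (P ** S)"
    using assms by (simp add: orth_proj_def matrix_mul_assoc)
  also have "\<dots> = trace (S ** P)"
    by (rule trace_mul_sym)
  finally show ?thesis .
qed

lemma trace_orth_proj_mult_nonneg:
  assumes "orth_proj (P::real^'n^'n)" "orth_proj S"
  shows "0 \<le> trace (S ** P)"
  using trace_gram_nonneg[of "S ** P"]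
  by (simp only: orth_proj_compress_eq_gram[OF assms, symmetric] trace_orth_proj_compress[OF assms(1)])

lemma orth_proj_compress_diag_bounds:
  assumes P: "orth_proj (P::real^'n^'n)" and S: "orth_proj S"
  shows "0 \<le> (P ** S ** P) $ j $ j" and "(P ** S ** P) $ j $ j \<le> P $ j $ j"
proof -
  show "0 \<le> (P ** S ** P) $ j $ j"
    unfolding orth_proj_compress_eq_gram[OF P S] by (rule gram_diag_nonneg)
  have "P ** (mat 1 - S) ** P = P - P ** S ** P"
    using P by (simp add: orth_proj_def matrix_diff_ldistrib matrix_diff_rdistrib)
  moreover have "0 \<le> (P ** (mat 1 - S) ** P) $ j $ j"
    unfolding orth_proj_compress_eq_gram[OF P orth_proj_compl[OF S]] by (rule gram_diag_nonneg)
  ultimately show "(P ** S ** P) $ j $ j \<le> P $ j $ j"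
    by simp
qed

lemma orth_proj_diag_eq:
  assumes "orth_proj (P::real^'n^'n)"
  shows "P $ j $ j = (\<Sum>k\<in>UNIV. (P $ k $ j)^2)"
  using assms gram_diag[of P j] by (simp add: orth_proj_def)

lemma orth_proj_diag_bounds:
  assumes "orth_proj (P::real^'n^'n)"
  shows "0 \<le> P $ j $ j" and "P $ j $ j \<le> 1"
proof -
  show "0 \<le> P $ j $ j"
    by (subst orth_proj_diag_eq[OF assms]) (simp add: sum_nonneg)
  have "0 \<le> (mat 1 - P) $ j $ j"
    by (subst orth_proj_diag_eq[OF orth_proj_compl[OF assms]]) (simp add: sum_nonneg)
  then show "P $ j $ j \<le> 1"
    by (simp add: mat_def)
qed

lemma orth_proj_off_diag:
  assumes P: "orth_proj (P::real^'n^'n)" and "l \<noteq> m" and "P $ l $ m \<noteq> 0"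
  shows "P $ m $ m \<noteq> 0" and "P $ m $ m \<noteq> 1"
proof -
  have "(\<Sum>k\<in>{m,l}. (P $ k $ m)^2) \<le> (\<Sum>k\<in>UNIV. (P $ k $ m)^2)"
    by (rule sum_mono2) auto
  then have "(P $ m $ m)^2 + (P $ l $ m)^2 \<le> P $ m $ m"
    using assms orth_proj_diag_eq[OF P, of m] by simp
  moreover have "0 < (P $ l $ m)^2"
    using assms by simp
  ultimately show "P $ m $ m \<noteq> 0" "P $ m $ m \<noteq> 1"
    by auto
qed

lemma hs_norm_sq_diff_orth_proj:
  assumes "orth_proj (P::real^'n^'n)" "orth_proj P'"
  shows "(hs_norm (P' - P))^2 = trace P' + trace P - 2 * trace (P' ** P)"
proof -
  have "(P' - P) ** (P' - P) = P' ** P' - P' ** P - (P ** P' - P ** P)"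
    by (simp add: matrix_diff_ldistrib matrix_diff_rdistrib)
  moreover have "trace (P ** P') = trace (P' ** P)"
    by (rule trace_mul_sym)
  ultimately show ?thesis
    using assms by (simp add: hs_norm_sq_eq_trace transpose_diff trace_sub orth_proj_def)
qed

text \<open>In an orthonormal basis \<open>B\<close> of the range, \<open>P x = (\<Sum>u\<in>B. (u \<bullet> x) *\<^sub>R u)\<close>, so each
  \<open>u \<in> B\<close> contributes \<open>\<Sum>i. (u $ i)^2 = 1\<close> to the trace.\<close>

lemma trace_orth_proj_eq_rank:
  assumes "orth_proj (P::real^'n^'n)"
  shows "trace P = real (rank P)"
proof -
  let ?S = "range (\<lambda>x. P *v x)"
  have sym: "transpose P = P" and idem: "P ** P = P"
    using assms by (auto simp: orth_proj_def)
  have "subspace ?S"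
    by (intro linear_subspace_image subspace_UNIV) (simp add: matrix_vector_mul_linear)
  then obtain B where B: "B \<subseteq> ?S" "pairwise orthogonal B" "\<And>x. x \<in> B \<Longrightarrow> norm x = 1"
     "independent B" "card B = dim ?S" "span B = ?S"
    using orthonormal_basis_subspace by blast
  have fin: "finite B"
    using B(4) independent_imp_finite by blast
  have unit: "u \<bullet> u = 1" if "u \<in> B" for u
    using B(3)[OF that] by (metis norm_eq_1)
  have fixed: "P *v u = u" if "u \<in> B" for u
    using B(1) that by (auto simp: matrix_vector_mul_assoc idem)
  have expand: "P *v x = (\<Sum>u\<in>B. (u \<bullet> x) *\<^sub>R u)" for x
  proof -
    have "P *v x \<in> span B"
      using B(6) by auto
    then obtain c where c: "P *v x = (\<Sum>u\<in>B. c u *\<^sub>R u)"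
      using span_finite[OF fin] by auto
    have "c u = u \<bullet> x" if "u \<in> B" for u
    proof -
      have "u \<bullet> (P *v x) = (\<Sum>v\<in>B. c v * (u \<bullet> v))"
        by (simp add: c inner_sum_right)
      also have "\<dots> = (\<Sum>v\<in>B. if v = u then c u else 0)"
        using B(2) unit that by (intro sum.cong) (auto simp: pairwise_def orthogonal_def)
      also have "\<dots> = c u"
        using fin that by simp
      finally have "c u = u \<bullet> (P *v x)" ..
      also have "\<dots> = (P *v u) \<bullet> x"
        by (metis dot_lmul_matrix sym transpose_matrix_vector)
      finally show ?thesis
        using fixed that by simp
    qed
    then show ?thesis
      unfolding c by (intro sum.cong) auto
  qed
  have "trace P = (\<Sum>i\<in>UNIV. (P *v axis i 1) $ i)"
    by (simp add: trace_def matrix_vector_mult_basis column_def)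
  also have "\<dots> = (\<Sum>i\<in>UNIV. \<Sum>u\<in>B. (u $ i)^2)"
    unfolding expand by (simp add: inner_axis power2_eq_square)
  also have "\<dots> = (\<Sum>u\<in>B. \<Sum>i\<in>UNIV. (u $ i)^2)"
    by (rule sum.swap)
  also have "\<dots> = (\<Sum>u\<in>B. 1)"
    by (rule sum.cong) (auto simp: unit[symmetric] inner_vec_def power2_eq_square)
  finally show ?thesis
    using B(5) rank_dim_range[of P] by simp
qed

lemma orth_proj_rank_iff: "X \<in> orth_proj_rank r \<longleftrightarrow> orth_proj X \<and> trace X = real r"
  using trace_orth_proj_eq_rank[of X] by (auto simp: orth_proj_rank_def orth_proj_def)

subsection \<open>Diagonal weights\<close>

lemma diag_mat_mult_nth: "(diag_mat w ** X) $ i $ j = w i * X $ i $ j"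
  unfolding diag_mat_def matrix_matrix_mult_def
  by (simp add: if_distrib[where f="\<lambda>x. x * _"] cong: if_cong)

lemma mult_diag_mat_nth: "(X ** diag_mat w) $ i $ j = X $ i $ j * w j"
  unfolding diag_mat_def matrix_matrix_mult_def
  by (simp add: if_distrib[where f="\<lambda>x. _ * x"] cong: if_cong)

lemma trace_diag_mat_mult: "trace (diag_mat w ** X) = (\<Sum>j\<in>UNIV. w j * X $ j $ j)"
  by (simp add: trace_def diag_mat_mult_nth)

lemma trace_diag_mat_mult_ge:
  assumes "\<And>j. 0 \<le> X $ j $ j" and "\<And>j. X $ j $ j \<noteq> 0 \<Longrightarrow> a \<le> w j"
  shows "a * trace X \<le> trace (diag_mat w ** X)"
proof -
  have "a * X $ j $ j \<le> w j * X $ j $ j" for j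
    using assms[of j] by (cases "X $ j $ j = 0") (auto intro: mult_right_mono)
  then show ?thesis
    unfolding trace_diag_mat_mult by (simp add: trace_def sum_distrib_left sum_mono)
qed

lemma trace_diag_mat_mult_le:
  assumes "\<And>j. 0 \<le> X $ j $ j" and "\<And>j. X $ j $ j \<noteq> 0 \<Longrightarrow> w j \<le> b"
  shows "trace (diag_mat w ** X) \<le> b * trace X"
proof -
  have "w j * X $ j $ j \<le> b * X $ j $ j" for j
    using assms[of j] by (cases "X $ j $ j = 0") (auto intro: mult_right_mono)
  then show ?thesis
    unfolding trace_diag_mat_mult by (simp add: trace_def sum_distrib_left sum_mono)
qed

lemma hs_norm_sq_mult_diag_mat:
  assumes "orth_proj X"
  shows "(hs_norm (X ** diag_mat d))^2 = trace (diag_mat (\<lambda>j. (d j)^2) ** X)"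
proof -
  have "(hs_norm (X ** diag_mat d))^2 = (\<Sum>i\<in>UNIV. \<Sum>j\<in>UNIV. (X $ i $ j * d j)^2)"
    by (simp add: hs_norm_def mult_diag_mat_nth sum_nonneg)
  also have "\<dots> = (\<Sum>j\<in>UNIV. (d j)^2 * (\<Sum>i\<in>UNIV. (X $ i $ j)^2))"
    by (subst sum.swap) (simp add: power_mult_distrib sum_distrib_left mult.commute)
  also have "\<dots> = trace (diag_mat (\<lambda>j. (d j)^2) ** X)"
    by (simp add: trace_diag_mat_mult orth_proj_diag_eq[OF assms])
  finally show ?thesis .
qed

lemma orth_proj_diag_indicator: "orth_proj (diag_mat (\<lambda>j. if j \<in> T then 1 else 0))"
  unfolding orth_proj_def
  by (simp add: vec_eq_iff diag_mat_mult_nth) (simp add: diag_mat_def transpose_def)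

lemma trace_diag_mat_mult_indicator:
  "trace (diag_mat w ** diag_mat (\<lambda>j. if j \<in> T then 1 else 0)) = sum w T"
  unfolding trace_diag_mat_mult
  by (simp add: diag_mat_def if_distrib[where f="\<lambda>x. _ * x"] sum.If_cases cong: if_cong)

lemma diag_mat_commute_orth_proj:
  assumes P: "orth_proj P" and "b \<le> a"
    and supp: "\<And>j. P $ j $ j \<noteq> 0 \<Longrightarrow> a \<le> w j" "\<And>j. P $ j $ j \<noteq> 1 \<Longrightarrow> w j \<le> b"
  shows "diag_mat w ** P = P ** diag_mat w"
proof -
  have sym: "P $ i $ j = P $ j $ i" for i j
  proof -
    have "transpose P $ j $ i = P $ j $ i"
      using P by (simp add: orth_proj_def)
    then show ?thesis
      by (simp add: transpose_def)
  qed
  have "w i = w j" if "P $ i $ j \<noteq> 0" for i j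
  proof (cases "i = j")
    case False
    have "w m = a" if "l \<noteq> m" "P $ l $ m \<noteq> 0" for l m
      using orth_proj_off_diag[OF P that] supp[of m] \<open>b \<le> a\<close> by fastforce
    then show ?thesis
      using False \<open>P $ i $ j \<noteq> 0\<close> sym[of i j] by metis
  qed simp
  then show ?thesis
    by (simp add: vec_eq_iff diag_mat_mult_nth mult_diag_mat_nth) (metis mult.commute mult_zero_right)
qed

text \<open>Because \<open>W\<close> commutes with \<open>P\<close>, the cross terms \<open>P S (1 - P)\<close> and \<open>(1 - P) S P\<close>
  do not contribute to \<open>trace (W ** S)\<close>.\<close>

lemma trace_mult_diff_split:
  fixes W P S :: "real^'n^'n"
  assumes P: "orth_proj P" and comm: "W ** P = P ** W"
  shows "trace (W ** P) - trace (W ** S)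
       = trace (W ** (P ** (mat 1 - S) ** P)) - trace (W ** ((mat 1 - P) ** S ** (mat 1 - P)))"
proof -
  have idem: "P ** P = P"
    using P by (simp add: orth_proj_def)
  have WP: "W ** P = P ** W ** P"
    by (metis comm idem matrix_mul_assoc)
  have left: "trace (W ** (P ** S)) = trace (W ** (P ** S ** P))"
  proof -
    have "trace (W ** (P ** S)) = trace (P ** (W ** P ** S))"
      by (metis WP matrix_mul_assoc)
    also have "\<dots> = trace ((W ** P ** S) ** P)"
      by (rule trace_mul_sym)
    finally show ?thesis
      by (simp add: matrix_mul_assoc)
  qed
  have right: "trace (W ** (S ** P)) = trace (W ** (P ** S))"
  proof -
    have "trace ((W ** S) ** P) = trace (P ** (W ** S))"
      by (rule trace_mul_sym)
    then show ?thesis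
      by (metis comm matrix_mul_assoc)
  qed
  have "P ** (mat 1 - S) ** P = P - P ** S ** P"
    using idem by (simp add: matrix_diff_ldistrib matrix_diff_rdistrib)
  moreover have "(mat 1 - P) ** S ** (mat 1 - P) = S - P ** S - S ** P + P ** S ** P"
    by (simp add: matrix_diff_ldistrib matrix_diff_rdistrib matrix_mul_assoc)
  ultimately show ?thesis
    using left right
    by (simp add: matrix_diff_ldistrib matrix_add_ldistrib trace_sub trace_add matrix_mul_assoc)
qed

subsection \<open>Weight vectors\<close>

lemma sum_top_minus_weighted_sum:
  fixes w z :: "'n::finite \<Rightarrow> real"
  shows "sum w T - (\<Sum>j\<in>UNIV. w j * z j)
       = (\<Sum>j\<in>T. (w j - \<theta>) * (1 - z j)) + \<theta> * (real (card T) - sum z UNIV)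
         + (\<Sum>j\<in>-T. (\<theta> - w j) * z j)"
proof -
  have split: "sum f UNIV = sum f T + sum f (-T)" for f :: "'n \<Rightarrow> real"
    by (metis Compl_eq_Diff_UNIV add.commute finite subset_UNIV sum.subset_diff)
  have "(\<Sum>j\<in>T. (w j - \<theta>) * (1 - z j))
      = sum w T - (\<Sum>j\<in>T. w j * z j) - \<theta> * real (card T) + \<theta> * sum z T"
    by (simp add: algebra_simps sum.distrib sum_subtractf sum_distrib_left)
  moreover have "(\<Sum>j\<in>-T. (\<theta> - w j) * z j) = \<theta> * sum z (-T) - (\<Sum>j\<in>-T. w j * z j)"
    by (simp add: algebra_simps sum_subtractf sum_distrib_left)
  ultimately show ?thesis
    using split[of z] split[of "\<lambda>j. w j * z j"] by (simp add: algebra_simps)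
qed

lemma optimal_weights_support:
  fixes p w :: "'n::finite \<Rightarrow> real"
  assumes p: "\<And>j. 0 \<le> p j" "\<And>j. p j \<le> 1" "sum p UNIV = card T"
    and gap: "b \<le> a" "\<And>j. j \<in> T \<Longrightarrow> a \<le> w j" "\<And>j. j \<notin> T \<Longrightarrow> w j \<le> b"
    and opt: "sum w T \<le> (\<Sum>j\<in>UNIV. w j * p j)"
  shows "p j \<noteq> 0 \<Longrightarrow> a \<le> w j" and "p j \<noteq> 1 \<Longrightarrow> w j \<le> b"
proof -
  \<comment> \<open>For \<open>\<theta> = a\<close> and for \<open>\<theta> = b\<close> both sums are termwise nonnegative, so every
    term vanishes.\<close>
  have slack: "(\<Sum>j\<in>T. (w j - \<theta>) * (1 - p j)) + (\<Sum>j\<in>-T. (\<theta> - w j) * p j) \<le> 0" for \<theta>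
    using sum_top_minus_weighted_sum[of w T p \<theta>] opt p(3) by simp
  have on_T: "0 \<le> (w j - \<theta>) * (1 - p j)" if "j \<in> T" "\<theta> \<le> a" for j \<theta>
    using gap(2)[OF that(1)] p(2)[of j] that(2) by simp
  have off_T: "0 \<le> (\<theta> - w j) * p j" if "j \<notin> T" "b \<le> \<theta>" for j \<theta>
    using gap(3)[OF that(1)] p(1)[of j] that(2) by simp
  have "(\<Sum>j\<in>-T. (a - w j) * p j) = 0"
    using slack[of a] sum_nonneg[of T, OF on_T] sum_nonneg[of "-T", OF off_T] gap(1) by force
  then have a_off_T: "(a - w j) * p j = 0" if "j \<notin> T" for j
    using off_T[of _ a] gap(1) that by (subst (asm) sum_nonneg_eq_0_iff) auto
  have "(\<Sum>j\<in>T. (w j - b) * (1 - p j)) = 0"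
    using slack[of b] sum_nonneg[of T, OF on_T] sum_nonneg[of "-T", OF off_T] gap(1) by force
  then have b_on_T: "(w j - b) * (1 - p j) = 0" if "j \<in> T" for j
    using on_T[of _ b] gap(1) that by (subst (asm) sum_nonneg_eq_0_iff) auto
  show "a \<le> w j" if "p j \<noteq> 0"
    using gap(2) a_off_T[of j] that by (cases "j \<in> T") auto
  show "w j \<le> b" if "p j \<noteq> 1"
    using gap(3) b_on_T[of j] that by (cases "j \<in> T") auto
qed

text \<open>Coordinate \<open>j\<close> carries the weight \<open>g (\<sigma> j)\<close>: \<open>\<sigma>\<close> ranks the coordinates as
  \<open>1, \<dots>, CARD('n)\<close> and the profile \<open>g\<close> is nonincreasing and vanishes beyond \<open>CARD('n)\<close>.
  In the theorem \<open>g i = (lam i)^2\<close>.\<close>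

definition ranked_weights :: "('n::finite \<Rightarrow> nat) \<Rightarrow> (nat \<Rightarrow> real) \<Rightarrow> bool" where
  "ranked_weights \<sigma> g \<longleftrightarrow> bij_betw \<sigma> UNIV {1..CARD('n)} \<and>
     (\<forall>i j. 1 \<le> i \<longrightarrow> i \<le> j \<longrightarrow> g j \<le> g i) \<and> (\<forall>i. CARD('n) < i \<longrightarrow> g i = 0)"

lemma ranked_top_image:
  assumes "bij_betw \<sigma> (UNIV::'n::finite set) {1..CARD('n)}"
  shows "\<sigma> ` {j. \<sigma> j \<le> k} = {1..min k CARD('n)}"
proof
  show "\<sigma> ` {j. \<sigma> j \<le> k} \<subseteq> {1..min k CARD('n)}"
    using assms by (auto simp: bij_betw_def)
  show "{1..min k CARD('n)} \<subseteq> \<sigma> ` {j. \<sigma> j \<le> k}"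
  proof
    fix i assume i: "i \<in> {1..min k CARD('n)}"
    then have "i \<in> \<sigma> ` UNIV"
      using assms by (auto simp: bij_betw_def)
    then obtain j where "\<sigma> j = i"
      by blast
    with i show "i \<in> \<sigma> ` {j. \<sigma> j \<le> k}"
      by auto
  qed
qed

lemma card_ranked_top:
  assumes "bij_betw \<sigma> (UNIV::'n::finite set) {1..CARD('n)}" and "k \<le> CARD('n)"
  shows "card {j. \<sigma> j \<le> k} = k"
proof -
  have "inj_on \<sigma> {j. \<sigma> j \<le> k}"
    using assms(1) by (auto simp: bij_betw_def intro: inj_on_subset)
  then have "card {j. \<sigma> j \<le> k} = card (\<sigma> ` {j. \<sigma> j \<le> k})"
    by (simp add: card_image)
  then show ?thesis
    using ranked_top_image[OF assms(1)] assms(2) by simp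
qed

lemma sum_ranked_top:
  fixes \<sigma> :: "'n::finite \<Rightarrow> nat"
  assumes "ranked_weights \<sigma> (g::nat \<Rightarrow> real)"
  shows "(\<Sum>j | \<sigma> j \<le> k. g (\<sigma> j)) = (\<Sum>i=1..k. g i)"
proof -
  have bij: "bij_betw \<sigma> UNIV {1..CARD('n)}" and zero: "\<And>i. CARD('n) < i \<Longrightarrow> g i = 0"
    using assms by (auto simp: ranked_weights_def)
  have "inj_on \<sigma> {j. \<sigma> j \<le> k}"
    using bij by (auto simp: bij_betw_def intro: inj_on_subset)
  then have "(\<Sum>j | \<sigma> j \<le> k. g (\<sigma> j)) = (\<Sum>i\<in>\<sigma> ` {j. \<sigma> j \<le> k}. g i)"
    by (simp add: sum.reindex)
  also have "\<dots> = (\<Sum>i=1..min k CARD('n). g i)"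
    by (simp add: ranked_top_image[OF bij])
  also have "\<dots> = (\<Sum>i=1..k. g i)"
    by (rule sum.mono_neutral_left) (auto simp: zero)
  finally show ?thesis .
qed

lemma ranked_weights_nonneg:
  fixes \<sigma> :: "'n::finite \<Rightarrow> nat"
  assumes "ranked_weights \<sigma> g" and "1 \<le> i"
  shows "0 \<le> g i"
proof -
  let ?j = "max i (Suc CARD('n))"
  have anti: "\<forall>i j. 1 \<le> i \<longrightarrow> i \<le> j \<longrightarrow> g j \<le> g i"
    and zero: "\<forall>i. CARD('n) < i \<longrightarrow> g i = 0"
    using assms(1) by (auto simp: ranked_weights_def)
  have "g ?j \<le> g i"
    using anti assms(2) by simp
  moreover have "g ?j = 0"
    using zero by simp
  ultimately show ?thesis
    by simp
qed

lemma ranked_weighted_sum_le: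
  fixes z :: "'n::finite \<Rightarrow> real"
  assumes g: "ranked_weights \<sigma> g" and k: "1 \<le> k"
    and z: "\<And>j. 0 \<le> z j" "\<And>j. z j \<le> 1" "sum z UNIV \<le> k"
  shows "(\<Sum>j\<in>UNIV. g (\<sigma> j) * z j) \<le> (\<Sum>i=1..k. g i)"
proof -
  define T where "T = {j. \<sigma> j \<le> k}"
  have bij: "bij_betw \<sigma> UNIV {1..CARD('n)}"
    and anti: "\<And>i j. 1 \<le> i \<Longrightarrow> i \<le> j \<Longrightarrow> g j \<le> g i"
    and zero: "\<And>i. CARD('n) < i \<Longrightarrow> g i = 0"
    using g by (auto simp: ranked_weights_def)
  have \<sigma>1: "1 \<le> \<sigma> j" for j
    using bij by (auto simp: bij_betw_def)
  have "0 \<le> (g (\<sigma> j) - g k) * (1 - z j)" if "j \<in> T" for j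
    using that anti[OF \<sigma>1[of j]] z(2)[of j] by (simp add: T_def)
  moreover have "0 \<le> (g k - g (\<sigma> j)) * z j" if "j \<in> -T" for j
    using that anti[OF k, of "\<sigma> j"] z(1)[of j] by (simp add: T_def)
  moreover have "0 \<le> g k * (real (card T) - sum z UNIV)"
  proof (cases "k \<le> CARD('n)")
    case True
    then show ?thesis
      using card_ranked_top[OF bij True] z(3) ranked_weights_nonneg[OF g k] by (simp add: T_def)
  qed (simp add: zero)
  ultimately have "0 \<le> sum (\<lambda>j. g (\<sigma> j)) T - (\<Sum>j\<in>UNIV. g (\<sigma> j) * z j)"
    unfolding sum_top_minus_weighted_sum[where \<theta> = "g k"] by (intro add_nonneg_nonneg sum_nonneg) auto
  then show ?thesis
    using sum_ranked_top[OF g] by (simp add: T_def)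
qed

subsection \<open>Projections maximising a weighted trace\<close>

lemma optimal_projection_deficit:
  fixes P S :: "real^'n^'n" and w :: "'n \<Rightarrow> real"
  assumes P: "orth_proj P" "trace P = card T" and S: "orth_proj S" "trace S = card T"
    and gap: "b \<le> a" "\<And>j. j \<in> T \<Longrightarrow> a \<le> w j" "\<And>j. j \<notin> T \<Longrightarrow> w j \<le> b"
    and opt: "sum w T \<le> trace (diag_mat w ** P)"
  defines "E \<equiv> (mat 1 - P) ** S ** (mat 1 - P)"
  shows "a * (card T - trace (S ** P)) - trace (diag_mat w ** E)
           \<le> trace (diag_mat w ** P) - trace (diag_mat w ** S)"
    and "trace (diag_mat w ** E) \<le> b * (card T - trace (S ** P))"
    and "0 \<le> P $ j $ j + E $ j $ j" and "P $ j $ j + E $ j $ j \<le> 1"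
    and "trace E = card T - trace (S ** P)"
proof -
  let ?W = "diag_mat w"
  define R where "R = P ** (mat 1 - S) ** P"
  have Q: "orth_proj (mat 1 - P)"
    using P(1) by (rule orth_proj_compl)
  have "sum (\<lambda>j. P $ j $ j) UNIV = card T"
    using P(2) by (simp add: trace_def)
  moreover have "sum w T \<le> (\<Sum>j\<in>UNIV. w j * P $ j $ j)"
    using opt by (simp add: trace_diag_mat_mult)
  ultimately have supp: "P $ j $ j \<noteq> 0 \<Longrightarrow> a \<le> w j" "P $ j $ j \<noteq> 1 \<Longrightarrow> w j \<le> b" for j
    using optimal_weights_support[OF orth_proj_diag_bounds[OF P(1)] _ gap] by auto
  have split: "trace (?W ** P) - trace (?W ** S) = trace (?W ** R) - trace (?W ** E)"
    unfolding R_def E_def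
    by (rule trace_mult_diff_split[OF P(1) diag_mat_commute_orth_proj[OF P(1) gap(1) supp]])
  have R_diag: "0 \<le> R $ j $ j" "R $ j $ j \<le> P $ j $ j" for j
    unfolding R_def using orth_proj_compress_diag_bounds[OF P(1) orth_proj_compl[OF S(1)]] by auto
  have E_diag: "0 \<le> E $ j $ j" "E $ j $ j \<le> 1 - P $ j $ j" for j
    unfolding E_def using orth_proj_compress_diag_bounds[OF Q S(1)] by (auto simp: mat_def)
  have "trace R = card T - trace (S ** P)"
    unfolding R_def trace_orth_proj_compress[OF P(1)] using P(2) by (simp add: matrix_diff_rdistrib trace_sub)
  moreover have "a * trace R \<le> trace (?W ** R)"
  proof (rule trace_diag_mat_mult_ge)
    show "a \<le> w j" if "R $ j $ j \<noteq> 0" for j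
      using R_diag[of j] that by (intro supp(1)) linarith
  qed (use R_diag in auto)
  ultimately show "a * (card T - trace (S ** P)) - trace (?W ** E) \<le> trace (?W ** P) - trace (?W ** S)"
    using split by simp
  show trace_E: "trace E = card T - trace (S ** P)"
    unfolding E_def trace_orth_proj_compress[OF Q] using S(2) by (simp add: matrix_diff_ldistrib trace_sub)
  have "trace (?W ** E) \<le> b * trace E"
  proof (rule trace_diag_mat_mult_le)
    show "w j \<le> b" if "E $ j $ j \<noteq> 0" for j
      using E_diag[of j] that by (intro supp(2)) linarith
  qed (use E_diag in auto)
  then show "trace (?W ** E) \<le> b * (card T - trace (S ** P))"
    by (simp add: trace_E)
  show "0 \<le> P $ j $ j + E $ j $ j" "P $ j $ j + E $ j $ j \<le> 1"
    using E_diag[of j] orth_proj_diag_bounds[OF P(1), of j] by auto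
qed

text \<open>The mass \<open>trace E\<close> that \<open>S\<close> moves off the range of \<open>P\<close> collects at most
  \<open>g (r+1) + \<dots> + g (2r)\<close>: together with the diagonal of \<open>P\<close>, which already collects the \<open>r\<close>
  largest weights, it has total mass at most \<open>2r\<close>.\<close>

lemma ranked_projection_deficit:
  fixes P S :: "real^'n^'n" and \<sigma> :: "'n \<Rightarrow> nat"
  assumes g: "ranked_weights \<sigma> g" and r: "1 \<le> r" "r \<le> CARD('n)"
    and P: "orth_proj P" "trace P = r" and S: "orth_proj S" "trace S = r"
    and opt: "(\<Sum>i=1..r. g i) \<le> trace (diag_mat (\<lambda>j. g (\<sigma> j)) ** P)"
  shows "trace (diag_mat (\<lambda>j. g (\<sigma> j)) ** S) - trace (diag_mat (\<lambda>j. g (\<sigma> j)) ** P)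
           \<le> - (1/2) * (g r - g (r + 1)) * (hs_norm (S - P))^2"
    and "trace (diag_mat (\<lambda>j. g (\<sigma> j)) ** S) - trace (diag_mat (\<lambda>j. g (\<sigma> j)) ** P)
           \<le> - (1/2) * g r * (hs_norm (S - P))^2 + (\<Sum>i=r+1..2*r. g i)"
proof -
  let ?W = "diag_mat (\<lambda>j. g (\<sigma> j))"
  define T where "T = {j. \<sigma> j \<le> r}"
  define E where "E = (mat 1 - P) ** S ** (mat 1 - P)"
  have bij: "bij_betw \<sigma> UNIV {1..CARD('n)}"
    and anti: "\<And>i j. 1 \<le> i \<Longrightarrow> i \<le> j \<Longrightarrow> g j \<le> g i"
    using g by (auto simp: ranked_weights_def)
  have \<sigma>1: "1 \<le> \<sigma> j" for j
    using bij by (auto simp: bij_betw_def)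
  have cT: "card T = r"
    unfolding T_def using card_ranked_top[OF bij r(2)] .
  have gap: "g (r + 1) \<le> g r" "\<And>j. j \<in> T \<Longrightarrow> g r \<le> g (\<sigma> j)"
    "\<And>j. j \<notin> T \<Longrightarrow> g (\<sigma> j) \<le> g (r + 1)"
    using anti r(1) \<sigma>1 by (auto simp: T_def)
  have opt': "sum (\<lambda>j. g (\<sigma> j)) T \<le> trace (?W ** P)"
    using opt sum_ranked_top[OF g] by (simp add: T_def)
  have "trace P = card T" "trace S = card T"
    using P(2) S(2) cT by simp_all
  note deficit = optimal_projection_deficit[OF P(1) this(1) S(1) this(2) gap opt', folded E_def, unfolded cT]
  have hs: "- (1/2) * c * (hs_norm (S - P))^2 = - (c * (r - trace (S ** P)))" for c
    using hs_norm_sq_diff_orth_proj[OF P(1) S(1)] P(2) S(2) by simp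
  show "trace (?W ** S) - trace (?W ** P) \<le> - (1/2) * (g r - g (r + 1)) * (hs_norm (S - P))^2"
    unfolding hs using deficit(1,2) by (simp add: algebra_simps)
  have "0 \<le> trace (S ** P)"
    using trace_orth_proj_mult_nonneg[OF P(1) S(1)] .
  then have "(\<Sum>j\<in>UNIV. P $ j $ j + E $ j $ j) \<le> real (2 * r)"
    using P(2) deficit(5) by (simp add: sum.distrib trace_def[symmetric])
  then have "(\<Sum>j\<in>UNIV. g (\<sigma> j) * (P $ j $ j + E $ j $ j)) \<le> (\<Sum>i=1..2*r. g i)"
    using deficit(3,4) r(1) by (intro ranked_weighted_sum_le[OF g]) auto
  moreover have "(\<Sum>i=1..2*r. g i) = (\<Sum>i=1..r. g i) + (\<Sum>i=r+1..2*r. g i)"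
    using sum.ub_add_nat[of 1 r g r] by (simp add: mult_2)
  ultimately have "trace (?W ** E) \<le> (\<Sum>i=r+1..2*r. g i)"
    using opt by (simp add: trace_diag_mat_mult distrib_left sum.distrib)
  then show "trace (?W ** S) - trace (?W ** P) \<le> - (1/2) * g r * (hs_norm (S - P))^2 + (\<Sum>i=r+1..2*r. g i)"
    unfolding hs using deficit(1) by simp
qed

subsection \<open>Back to singular values\<close>

lemma singular_values_ranked_svd:
  fixes C :: "real^'n^'n"
  assumes "singular_values C lam"
  obtains U V \<sigma> where "orthogonal_matrix U" "orthogonal_matrix V"
    "ranked_weights \<sigma> (\<lambda>i. (lam i)^2)" "C = U ** diag_mat (\<lambda>j. lam (\<sigma> j)) ** transpose V"
proof -
  obtain U V and \<sigma> :: "'n \<Rightarrow> nat" where UV: "orthogonal_matrix U" "orthogonal_matrix V"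
    and bij: "bij_betw \<sigma> UNIV {1..CARD('n)}"
    and C: "C = U ** diag_mat (\<lambda>j. lam (\<sigma> j)) ** transpose V"
    using assms unfolding singular_values_def diag_mat_def by blast
  have "(lam j)^2 \<le> (lam i)^2" if "1 \<le> i" "i \<le> j" for i j
  proof (cases "j \<le> CARD('n)")
    case True
    then have "0 \<le> lam j" "lam j \<le> lam i"
      using assms that unfolding singular_values_def by auto
    then show ?thesis
      by (simp add: power_mono)
  next
    case False
    then show ?thesis
      using assms unfolding singular_values_def by simp
  qed
  then have "ranked_weights \<sigma> (\<lambda>i. (lam i)^2)"
    using assms bij by (simp add: ranked_weights_def singular_values_def)
  with UV C show thesis
    using that by blast
qed

lemma exists_orth_proj_rank_top_weight:
  fixes U :: "real^'n^'n" and \<sigma> :: "'n \<Rightarrow> nat"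
  assumes U: "orthogonal_matrix U" and g: "ranked_weights \<sigma> g" and r: "r \<le> CARD('n)"
  obtains X where "X \<in> orth_proj_rank r"
    and "trace (diag_mat (\<lambda>j. g (\<sigma> j)) ** (transpose U ** X ** U)) = (\<Sum>i=1..r. g i)"
proof -
  define T where "T = {j. \<sigma> j \<le> r}"
  define D where "D = diag_mat (\<lambda>j. if j \<in> T then 1 else 0)"
  have bij: "bij_betw \<sigma> UNIV {1..CARD('n)}"
    using g by (simp add: ranked_weights_def)
  have U': "orthogonal_matrix (transpose U)"
    using U by simp
  have "transpose U ** (U ** D ** transpose U) ** U = (transpose U ** U) ** D ** (transpose U ** U)"
    by (simp add: matrix_mul_assoc)
  then have conj: "transpose U ** (U ** D ** transpose U) ** U = D"
    using U by (simp add: orthogonal_matrix_def)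
  have D: "orth_proj D"
    unfolding D_def by (rule orth_proj_diag_indicator)
  have "trace D = card T"
    using trace_diag_mat_mult_indicator[of "\<lambda>_. 1" T] by (simp add: D_def diag_mat_def mat_def[symmetric])
  then have "U ** D ** transpose U \<in> orth_proj_rank r"
    using orth_proj_orthogonal_conj[OF U' D] trace_orthogonal_conj[OF U', of D] card_ranked_top[OF bij r]
    by (simp add: orth_proj_rank_iff T_def)
  moreover have "trace (diag_mat (\<lambda>j. g (\<sigma> j)) ** D) = sum (\<lambda>j. g (\<sigma> j)) T"
    unfolding D_def by (rule trace_diag_mat_mult_indicator)
  then have "trace (diag_mat (\<lambda>j. g (\<sigma> j)) ** D) = (\<Sum>i=1..r. g i)"
    using sum_ranked_top[OF g] by (simp add: T_def)
  ultimately show thesis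
    using that conj by auto
qed

theorem lemma2:
  fixes C \<pi> :: "real^'n^'n" and lam :: "nat \<Rightarrow> real" and r :: nat
  assumes r: "1 \<le> r" "r \<le> CARD('n)"
    and sv: "singular_values C lam"
    and pi: "\<pi> \<in> orth_proj_rank r"
    and max: "\<forall>\<pi>' \<in> orth_proj_rank r. hs_norm (\<pi>' ** C) \<le> hs_norm (\<pi> ** C)"
  shows "(\<forall>\<pi>' \<in> orth_proj_rank r.
            (hs_norm (\<pi>' ** C))^2 - (hs_norm (\<pi> ** C))^2
              \<le> - (1/2) * ((lam r)^2 - (lam (r+1))^2) * (hs_norm (\<pi>' - \<pi>))^2)
       \<and> (lam r > 0 \<longrightarrow>
          (\<forall>\<pi>' \<in> orth_proj_rank r.
            hs_norm (\<pi>' - \<pi>) \<ge> sqrt (2 * (\<Sum>i=r+1..2*r. (lam i)^2)) / lam r \<longrightarrow>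
            (hs_norm (\<pi>' ** C))^2 - (hs_norm (\<pi> ** C))^2
              \<le> - (1/2) * (lam r)^2 * (hs_norm (\<pi>' - \<pi>))^2 + (\<Sum>i=r+1..2*r. (lam i)^2)))"
proof -
  obtain U V and \<sigma> :: "'n \<Rightarrow> nat" where U: "orthogonal_matrix U" and V: "orthogonal_matrix V"
    and g: "ranked_weights \<sigma> (\<lambda>i. (lam i)^2)" and C: "C = U ** diag_mat (\<lambda>j. lam (\<sigma> j)) ** transpose V"
    using sv by (rule singular_values_ranked_svd)
  define W where "W = diag_mat (\<lambda>j. (lam (\<sigma> j))^2)"
  define cj where "cj X = transpose U ** X ** U" for X
  have proj: "orth_proj (cj X)" "trace (cj X) = r" if "X \<in> orth_proj_rank r" for X
    using that U by (simp_all add: orth_proj_rank_iff cj_def orth_proj_orthogonal_conj trace_orthogonal_conj)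
  have obj: "(hs_norm (X ** C))^2 = trace (W ** cj X)" if "X \<in> orth_proj_rank r" for X
    using proj[OF that] by (simp add: C W_def cj_def hs_norm_mult_svd[OF U V] hs_norm_sq_mult_diag_mat)
  have dist: "hs_norm (X - \<pi>) = hs_norm (cj X - cj \<pi>)" for X
    using hs_norm_orthogonal_conj[OF U, of "X - \<pi>"] by (simp add: cj_def matrix_diff_ldistrib matrix_diff_rdistrib)
  obtain X0 where X0: "X0 \<in> orth_proj_rank r" "trace (W ** cj X0) = (\<Sum>i=1..r. (lam i)^2)"
    using exists_orth_proj_rank_top_weight[OF U g r(2)] unfolding W_def cj_def by blast
  have "hs_norm (X0 ** C) \<le> hs_norm (\<pi> ** C)"
    using max X0(1) by blast
  then have "(hs_norm (X0 ** C))^2 \<le> (hs_norm (\<pi> ** C))^2"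
    by (rule power_mono) (rule hs_norm_nonneg)
  then have opt: "(\<Sum>i=1..r. (lam i)^2) \<le> trace (W ** cj \<pi>)"
    using X0 obj[OF X0(1)] obj[OF pi] by simp
  have "(hs_norm (\<pi>' ** C))^2 - (hs_norm (\<pi> ** C))^2
          \<le> - (1/2) * ((lam r)^2 - (lam (r+1))^2) * (hs_norm (\<pi>' - \<pi>))^2
        \<and> (hs_norm (\<pi>' ** C))^2 - (hs_norm (\<pi> ** C))^2
          \<le> - (1/2) * (lam r)^2 * (hs_norm (\<pi>' - \<pi>))^2 + (\<Sum>i=r+1..2*r. (lam i)^2)"
    if "\<pi>' \<in> orth_proj_rank r" for \<pi>'
    using ranked_projection_deficit[OF g r proj[OF pi] proj[OF that] opt[unfolded W_def]]
    by (simp add: obj[OF that] obj[OF pi] dist W_def)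
  then show ?thesis
    by blast
qed

end
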